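(* Let $g$ be an $n$-person WTT game form satisfying the standing assumptions below, let $i\in[n]$ and let $j\neq k$ be elements of $X_i$. Then exactly one of the following holds: (1) $H_j\stackrel{c}{\Longrightarrow}H_k$ for some outcome $c$, and $H_k^{\neq}(j)$ contains two profiles with distinct outcomes $a\neq b$ (both different from $c$); (2) $H_k\stackrel{d}{\Longrightarrow}H_j$ for some outcome $d$, and $H_j^{\neq}(k)$ contains two profiles with distinct outcomes $a\neq b$ (both different from $d$); (3) $H_j\stackrel{c}{\longrightarrow}H_k$ and $H_k\stackrel{d}{\longrightarrow}H_j$ for some outcomes $c\neq d$.
   Context: Let $X_1,\dots,X_n$ and $A$ be finite nonempty sets. An $n$-person game form is a map $g: X_1\times\cdots\times X_n\to A$; elements of $X=X_1\times\cdots\times X_n$ are strategy profiles, elements of $A$ are outcomes. For a direction $i\in[n]$ write $X_{-i}=\prod_{t\neq i}X_t$, and for $s\in X_i$, $y\in X_{-i}$ write $(s,y)$ for the profile with $i$-th coordinate $s$ and other coordinates $y$. The hyperplane perpendicular to direction $i$ at $s\in X_i$ is $H_s=\{x\in X: x_i=s\}$. $g$ is weakly totally tight (WTT) if for every $i\in[n]$, all $s\neq s'$ in $X_i$ and all $y\neq y'$ in $X_{-i}$, at least one of $g(s,y)=g(s,y')$, $g(s,y)=g(s',y)$, $g(s',y')=g(s',y)$, $g(s',y')=g(s,y')$ holds. A set $S\subseteq X$ is a constant region if there is $c\in A$ with $g(x)=c$ for all $x\in S$. For a direction $i$ and distinct $j,k\in X_i$, set $H_j^{\neq}(k)=\{(j,y):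 y\in X_{-i},\ g(j,y)\neq g(k,y)\}$ and $H_j^{=}(k)=H_j\setminus H_j^{\neq}(k)$. We write $H_j\stackrel{c}{\longrightarrow}H_k$ ($H_j$ dominates $H_k$ by $c$) if $g(x)=c$ for all $x\in H_j^{\neq}(k)$; we write $H_j\stackrel{c}{\Longrightarrow}H_k$ ($H_j$ strictly dominates $H_k$ by $c$) if $H_j\stackrel{c}{\longrightarrow}H_k$ and there is no outcome $d$ with $H_k\stackrel{d}{\longrightarrow}H_j$. Standing assumptions: no hyperplane of $g$ is a constant region, and no two distinct parallel hyperplanes are identical, i.e. for every $i$ and distinct $j,k\in X_i$ there is $y\in X_{-i}$ with $g(j,y)\neq g(k,y)$. *)

theory Defs
  imports "HOL-Library.FuncSet"
begin

text \<open>A strategy profile is an element of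
  PiE {..<n} X (undefined outside the players). For direction i, X_{-i} is represented by
  PiE ({..<n} - {i}) X, and the profile (s,y) is y(i := s).\<close>

definition profiles :: "nat \<Rightarrow> (nat \<Rightarrow> 'b set) \<Rightarrow> (nat \<Rightarrow> 'b) set" where
  "profiles n X = PiE {..<n} X"

definition others :: "nat \<Rightarrow> (nat \<Rightarrow> 'b set) \<Rightarrow> nat \<Rightarrow> (nat \<Rightarrow> 'b) set" where
  "others n X i = PiE ({..<n} - {i}) X"

definition WTT :: "nat \<Rightarrow> (nat \<Rightarrow> 'b set) \<Rightarrow> ((nat \<Rightarrow> 'b) \<Rightarrow> 'a) \<Rightarrow> bool" where
  "WTT n X g \<longleftrightarrow>
    (\<forall>i<n. \<forall>s\<in>X i. \<forall>s'\<in>X i. \<forall>y\<in>others n X i. \<forall>y'\<in>others n X i.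
       s \<noteq> s' \<longrightarrow> y \<noteq> y' \<longrightarrow>
       g (y(i := s)) = g (y'(i := s)) \<or> g (y(i := s)) = g (y(i := s')) \<or>
       g (y'(i := s')) = g (y(i := s')) \<or> g (y'(i := s')) = g (y'(i := s)))"

definition constant_region :: "((nat \<Rightarrow> 'b) \<Rightarrow> 'a) \<Rightarrow> (nat \<Rightarrow> 'b) set \<Rightarrow> bool" where
  "constant_region g S \<longleftrightarrow> (\<exists>c. \<forall>x\<in>S. g x = c)"

definition hyperplane :: "nat \<Rightarrow> (nat \<Rightarrow> 'b set) \<Rightarrow> nat \<Rightarrow> 'b \<Rightarrow> (nat \<Rightarrow> 'b) set" where
  "hyperplane n X i s = {x \<in> profiles n X. x i = s}"

definition Hneq :: "nat \<Rightarrow> (nat \<Rightarrow> 'b set) \<Rightarrow> ((nat \<Rightarrow> 'b) \<Rightarrow> 'a) \<Rightarrow> nat \<Rightarrow> 'b \<Rightarrow> 'b \<Rightarrow> (nat \<Rightarrow> 'b) set" where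
  "Hneq n X g i j k = {y(i := j) | y. y \<in> others n X i \<and> g (y(i := j)) \<noteq> g (y(i := k))}"

definition dominates :: "nat \<Rightarrow> (nat \<Rightarrow> 'b set) \<Rightarrow> ((nat \<Rightarrow> 'b) \<Rightarrow> 'a) \<Rightarrow> nat \<Rightarrow> 'b \<Rightarrow> 'b \<Rightarrow> 'a \<Rightarrow> bool" where
  "dominates n X g i j k c \<longleftrightarrow> (\<forall>x\<in>Hneq n X g i j k. g x = c)"

definition strictly_dominates :: "nat \<Rightarrow> (nat \<Rightarrow> 'b set) \<Rightarrow> 'a set \<Rightarrow> ((nat \<Rightarrow> 'b) \<Rightarrow> 'a) \<Rightarrow> nat \<Rightarrow> 'b \<Rightarrow> 'b \<Rightarrow> 'a \<Rightarrow> bool" where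
  "strictly_dominates n X A g i j k c \<longleftrightarrow>
     dominates n X g i j k c \<and> \<not> (\<exists>d\<in>A. dominates n X g i k j d)"

definition exactly_one3 :: "bool \<Rightarrow> bool \<Rightarrow> bool \<Rightarrow> bool" where
  "exactly_one3 P Q R \<longleftrightarrow> (P \<and> \<not> Q \<and> \<not> R) \<or> (\<not> P \<and> Q \<and> \<not> R) \<or> (\<not> P \<and> \<not> Q \<and> R)"

end

theory Submission
  imports Defs
begin

text \<open>On the profiles y where the hyperplanes H_j and H_k disagree, WTT applied to two such
  profiles y, y' leaves only g(j,y) = g(j,y') or g(k,y) = g(k,y'). Two functions with this
  pairwise property cannot both be non-constant, so H_j^{\<noteq>}(k) or
  H_k^{\<noteq>}(j) is a constant region, i.e. at least one hyperplane dominates the other. Which of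
  the two is constant decides between the three alternatives; when both are, the two
  constants differ because H_j and H_k disagree somewhere.\<close>

lemma constant_on_either:
  assumes pair: "\<forall>y\<in>D. \<forall>y'\<in>D. f y = f y' \<or> h y = h y'"
  shows "(\<exists>c. \<forall>y\<in>D. f y = c) \<or> (\<exists>d. \<forall>y\<in>D. h y = d)"
proof (rule ccontr)
  assume "\<not> ?thesis"
  then obtain y1 y2 y3 y4 where y: "y1 \<in> D" "y2 \<in> D" "f y1 \<noteq> f y2"
      "y3 \<in> D" "y4 \<in> D" "h y3 \<noteq> h y4"
    by blast
  have h12: "h y1 = h y2" and f34: "f y3 = f y4"
    using pair y by blast+
  \<comment> \<open>p differs from y3 in f but agrees with y1 in h; q the other way round\<close>
  obtain p where p: "p \<in> D" "f p \<noteq> f y3" "h p = h y1"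
    using y h12 by (cases "f y1 = f y3") auto
  obtain q where q: "q \<in> D" "h q \<noteq> h y1" "f q = f y3"
    using y f34 by (cases "h y3 = h y1") auto
  show False
    using pair p q by metis
qed

definition disagreements ::
    "nat \<Rightarrow> (nat \<Rightarrow> 'b set) \<Rightarrow> ((nat \<Rightarrow> 'b) \<Rightarrow> 'a) \<Rightarrow> nat \<Rightarrow> 'b \<Rightarrow> 'b \<Rightarrow> (nat \<Rightarrow> 'b) set" where
  "disagreements n X g i j k = {y \<in> others n X i. g (y(i := j)) \<noteq> g (y(i := k))}"

lemma disagreements_commute: "disagreements n X g i j k = disagreements n X g i k j"
  unfolding disagreements_def by auto

lemma Hneq_eq_image: "Hneq n X g i j k = (\<lambda>y. y(i := j)) ` disagreements n X g i j k"
  unfolding Hneq_def disagreements_def by auto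

lemma dominates_iff_disagreements:
  "dominates n X g i j k c \<longleftrightarrow> (\<forall>y\<in>disagreements n X g i j k. g (y(i := j)) = c)"
  by (simp add: dominates_def Hneq_eq_image)

lemma dominates_Hneq_neq:
  assumes "dominates n X g i j k c" "x \<in> Hneq n X g i k j"
  shows "g x \<noteq> c"
  using assms disagreements_commute[of n X g i j k]
  by (auto simp: Hneq_eq_image dominates_iff_disagreements disagreements_def)

lemma update_in_profiles:
  assumes "y \<in> others n X i" "i < n" "s \<in> X i"
  shows "y(i := s) \<in> profiles n X"
  using assms unfolding others_def profiles_def PiE_iff by (auto simp: extensional_def)

lemma dominates_value_in_range:
  assumes "g \<in> profiles n X \<rightarrow> A" "i < n" "j \<in> X i"
    and "disagreements n X g i j k \<noteq> {}" "dominates n X g i j k c"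
  shows "c \<in> A"
proof -
  obtain y where y: "y \<in> disagreements n X g i j k"
    using assms(4) by blast
  then have "y(i := j) \<in> profiles n X"
    using assms(2,3) by (intro update_in_profiles) (simp_all add: disagreements_def)
  then have "g (y(i := j)) \<in> A"
    using assms(1) by (rule funcset_mem[rotated])
  moreover have "g (y(i := j)) = c"
    using y assms(5) unfolding dominates_iff_disagreements by blast
  ultimately show ?thesis
    by simp
qed

lemma WTT_disagreements:
  assumes wtt: "WTT n X g" and "i < n" "j \<in> X i" "k \<in> X i" "j \<noteq> k"
    and y: "y \<in> disagreements n X g i j k" and y': "y' \<in> disagreements n X g i j k"
  shows "g (y(i := j)) = g (y'(i := j)) \<or> g (y(i := k)) = g (y'(i := k))"
proof (cases "y = y'")
  case False
  have "y \<in> others n X i" "y' \<in> others n X i"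
    using y y' unfolding disagreements_def by auto
  then have "g (y(i := j)) = g (y'(i := j)) \<or> g (y(i := j)) = g (y(i := k)) \<or>
      g (y'(i := k)) = g (y(i := k)) \<or> g (y'(i := k)) = g (y'(i := j))"
    using wtt assms(2-5) False unfolding WTT_def by blast
  then show ?thesis
    using y y' unfolding disagreements_def by auto
qed simp

lemma WTT_dominates_either:
  assumes "WTT n X g" "i < n" "j \<in> X i" "k \<in> X i" "j \<noteq> k"
  shows "(\<exists>c. dominates n X g i j k c) \<or> (\<exists>d. dominates n X g i k j d)"
proof -
  let ?D = "disagreements n X g i j k"
  have "(\<exists>c. \<forall>y\<in>?D. g (y(i := j)) = c) \<or> (\<exists>d. \<forall>y\<in>?D. g (y(i := k)) = d)"
    by (rule constant_on_either) (auto simp: disagreements_def WTT_disagreements[OF assms])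
  then show ?thesis
    by (simp add: dominates_iff_disagreements disagreements_commute[of n X g i k j])
qed

lemma dominates_values_differ:
  assumes "disagreements n X g i j k \<noteq> {}"
    and "dominates n X g i j k c" "dominates n X g i k j d"
  shows "c \<noteq> d"
proof -
  obtain x where "x \<in> Hneq n X g i k j"
    using assms(1) by (auto simp: Hneq_eq_image disagreements_commute)
  then show ?thesis
    using assms(2,3) dominates_Hneq_neq[OF assms(2)] unfolding dominates_def by blast
qed

lemma strict_alternative_iff:
  assumes gA: "g \<in> profiles n X \<rightarrow> A" and i: "i < n" and j: "j \<in> X i" and k: "k \<in> X i"
    and D: "disagreements n X g i j k \<noteq> {}"
  shows "(\<exists>c\<in>A. strictly_dominates n X A g i j k c \<and>
        (\<exists>x\<in>Hneq n X g i k j. \<exists>x'\<in>Hneq n X g i k j.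
            g x \<noteq> g x' \<and> g x \<noteq> c \<and> g x' \<noteq> c))
    \<longleftrightarrow> (\<exists>c. dominates n X g i j k c) \<and> \<not> (\<exists>d. dominates n X g i k j d)"
    (is "?strict \<longleftrightarrow> _")
proof
  have D': "disagreements n X g i k j \<noteq> {}"
    using D by (simp add: disagreements_commute)
  show "?strict \<Longrightarrow> (\<exists>c. dominates n X g i j k c) \<and> \<not> (\<exists>d. dominates n X g i k j d)"
    using dominates_value_in_range[OF gA i k D'] unfolding strictly_dominates_def by blast
  assume "(\<exists>c. dominates n X g i j k c) \<and> \<not> (\<exists>d. dominates n X g i k j d)"
  then obtain c where c: "dominates n X g i j k c" and no_d: "\<not> (\<exists>d. dominates n X g i k j d)"
    by blast
  have "Hneq n X g i k j \<noteq> {}"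
    using D' by (simp add: Hneq_eq_image)
  then obtain x x' where "x \<in> Hneq n X g i k j" "x' \<in> Hneq n X g i k j" "g x \<noteq> g x'"
    using no_d unfolding dominates_def by (metis all_not_in_conv)
  then show ?strict
    using c no_d dominates_value_in_range[OF gA i j D c] dominates_Hneq_neq[OF c]
    unfolding strictly_dominates_def by blast
qed

theorem mainTheorem3:
  fixes n :: nat and X :: "nat \<Rightarrow> 'b set" and A :: "'a set"
    and g :: "(nat \<Rightarrow> 'b) \<Rightarrow> 'a" and i :: nat and j k :: 'b
  assumes finX: "\<forall>t<n. finite (X t) \<and> X t \<noteq> {}"
    and finA: "finite A" "A \<noteq> {}"
    and gA: "g \<in> profiles n X \<rightarrow> A"
    and wtt: "WTT n X g"
    and no_const: "\<forall>t<n. \<forall>s\<in>X t. \<not> constant_region g (hyperplane n X t s)"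
    and no_ident: "\<forall>t<n. \<forall>s\<in>X t. \<forall>s'\<in>X t. s \<noteq> s' \<longrightarrow>
                     (\<exists>y\<in>others n X t. g (y(t := s)) \<noteq> g (y(t := s')))"
    and i: "i < n" and j: "j \<in> X i" and k: "k \<in> X i" and jk: "j \<noteq> k"
  shows "exactly_one3
    (\<exists>c\<in>A. strictly_dominates n X A g i j k c \<and>
        (\<exists>x\<in>Hneq n X g i k j. \<exists>x'\<in>Hneq n X g i k j.
            g x \<noteq> g x' \<and> g x \<noteq> c \<and> g x' \<noteq> c))
    (\<exists>d\<in>A. strictly_dominates n X A g i k j d \<and>
        (\<exists>x\<in>Hneq n X g i j k. \<exists>x'\<in>Hneq n X g i j k.
            g x \<noteq> g x' \<and> g x \<noteq> d \<and> g x' \<noteq> d))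
    (\<exists>c\<in>A. \<exists>d\<in>A. c \<noteq> d \<and> dominates n X g i j k c \<and> dominates n X g i k j d)"
proof -
  have D_jk: "disagreements n X g i j k \<noteq> {}"
    using no_ident i j k jk unfolding disagreements_def by blast
  then have D_kj: "disagreements n X g i k j \<noteq> {}"
    by (simp add: disagreements_commute)
  have mutual: "(\<exists>c\<in>A. \<exists>d\<in>A. c \<noteq> d \<and> dominates n X g i j k c \<and> dominates n X g i k j d)
      \<longleftrightarrow> (\<exists>c. dominates n X g i j k c) \<and> (\<exists>d. dominates n X g i k j d)"
    using dominates_values_differ[OF D_jk] dominates_value_in_range[OF gA i j D_jk]
      dominates_value_in_range[OF gA i k D_kj] by blast
  show ?thesis
    unfolding exactly_one3_def mutual strict_alternative_iff[OF gA i j k D_jk]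
      strict_alternative_iff[OF gA i k j D_kj]
    using WTT_dominates_either[OF wtt i j k jk] by blast
qed

end
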